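(* Let $R$ be a ring of characteristic $0$ and let $p,q$ be integers with $1\le p\le 3$ and $1\le q\le 5$. Suppose $R$ has the $2$-nil-sum property of type $(p,q)$, i.e. every non central-unit $a\in R$ can be written as $a=b+c$ with $b,c\in R$, $b^p=0$ and $c^q=0$. Then $R$ is commutative.
   Context: All rings are associative with identity. A central unit of $R$ is a unit of $R$ lying in the center of $R$; a non central-unit is an element that is not a central unit. *)

theory Defs
  imports Main
begin

definition ring_unit :: "'a::ring_1 \<Rightarrow> bool" where
  "ring_unit x \<longleftrightarrow> (\<exists>y. x * y = 1 \<and> y * x = 1)"

definition central :: "'a::ring_1 \<Rightarrow> bool" where
  "central x \<longleftrightarrow> (\<forall>y. x * y = y * x)"

definition central_unit :: "'a::ring_1 \<Rightarrow> bool" where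
  "central_unit x \<longleftrightarrow> ring_unit x \<and> central x"

definition two_nil_sum :: "nat \<Rightarrow> nat \<Rightarrow> 'a::ring_1 itself \<Rightarrow> bool" where
  "two_nil_sum p q (T :: 'a itself) \<longleftrightarrow>
     (\<forall>a::'a. \<not> central_unit a \<longrightarrow> (\<exists>b c. a = b + c \<and> b ^ p = 0 \<and> c ^ q = 0))"

end

theory Submission
  imports Defs "HOL-Library.Sublist" "Jordan_Normal_Form.Schur_Decomposition"
begin

text \<open>In characteristic 0 a nonzero integer \<open>n\<close> cannot be a sum of two nilpotents, which would
  commute with each other and make \<open>n\<close> nilpotent; so every nonzero integer is invertible and the
  ring is a \<open>\<rat>\<close>-algebra. Every element is a central unit or a sum \<open>b + c\<close> with \<open>b\<^sup>3 = c\<^sup>5 = 0\<close>,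
  so it suffices that elements \<open>n\<close> with \<open>n\<^sup>5 = 0\<close> are central. Otherwise a suitable power \<open>m\<close>
  of \<open>n\<close> is not central while \<open>s = m\<^sup>2\<close> is central with \<open>s\<^sup>3 = 0\<close>, and \<open>1 + m = b + c\<close> gives
  \<open>(b + c - 1)\<^sup>2 = s\<close>. A noncommutative Groebner basis computation shows that finitely many
  monomials \<open>s\<^sup>j w(b, c)\<close> span a \<open>\<rat>\<close>-subspace containing 1 and stable under left
  multiplication by \<open>b\<close> and \<open>c\<close>. On it \<open>1 = b + c + (1 - b - c)\<close> is a sum of three nilpotent
  operators; comparing traces, the subspace has dimension 0, so the ring is zero.\<close>

section \<open>Nilpotent matrices have trace zero\<close>

definition mat_trace :: "'a::comm_ring_1 mat \<Rightarrow> 'a" where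
  "mat_trace A = (\<Sum>i<dim_row A. A $$ (i,i))"

lemma mat_trace_mult_comm:
  assumes "A \<in> carrier_mat n n" "B \<in> carrier_mat n n"
  shows "mat_trace (A * B) = mat_trace (B * A)"
proof -
  have "mat_trace (A * B) = (\<Sum>i<n. \<Sum>k<n. A $$ (i,k) * B $$ (k,i))"
    using assms by (simp add: mat_trace_def scalar_prod_def atLeast0LessThan)
  also have "\<dots> = (\<Sum>k<n. \<Sum>i<n. B $$ (k,i) * A $$ (i,k))"
    by (subst sum.swap) (simp add: mult.commute)
  also have "\<dots> = mat_trace (B * A)"
    using assms by (simp add: mat_trace_def scalar_prod_def atLeast0LessThan)
  finally show ?thesis .
qed

lemma mat_trace_add:
  "A \<in> carrier_mat n n \<Longrightarrow> B \<in> carrier_mat n n \<Longrightarrow>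
    mat_trace (A + B) = mat_trace A + mat_trace B"
  by (simp add: mat_trace_def sum.distrib)

lemma mat_trace_one: "mat_trace (1\<^sub>m n :: 'a::comm_ring_1 mat) = of_nat n"
  by (simp add: mat_trace_def)

lemma eigenvalue_nilpotent_eq_0:
  fixes A :: "'a::idom mat"
  assumes A: "A \<in> carrier_mat n n" and nil: "A ^\<^sub>m k = 0\<^sub>m n n" and ev: "eigenvalue A e"
  shows "e = 0"
proof -
  obtain v where v: "eigenvector A v e" using ev unfolding eigenvalue_def by blast
  then have vn: "v \<in> carrier_vec n" "v \<noteq> 0\<^sub>v n" using A unfolding eigenvector_def by auto
  then obtain i where i: "i < n" "v $ i \<noteq> 0" by (metis eq_vecI carrier_vecD index_zero_vec)
  have "e ^ k \<cdot>\<^sub>v v = A ^\<^sub>m k *\<^sub>v v" by (rule eigenvector_pow[OF A v, symmetric])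
  also have "\<dots> = 0\<^sub>v n" using nil vn by (intro eq_vecI) auto
  finally have "e ^ k * v $ i = 0" using i vn by (metis index_smult_vec(1) index_zero_vec(1) carrier_vecD)
  then show "e = 0" using i by simp
qed

lemma mat_trace_nilpotent_complex:
  fixes A :: "complex mat"
  assumes A: "A \<in> carrier_mat n n" and nil: "A ^\<^sub>m k = 0\<^sub>m n n"
  shows "mat_trace A = 0"
proof -
  obtain es where es: "char_poly A = (\<Prod>a\<leftarrow>es. [:- a, 1:])"
    using char_poly_factorized[OF A] by blast
  obtain B P Q where sd: "schur_decomposition A es = (B,P,Q)" by (cases "schur_decomposition A es")
  from schur_decomposition[OF A es sd] have sim: "similar_mat_wit A B P Q" and dB: "diag_mat B = es"
    by auto
  from sim A have B: "B \<in> carrier_mat n n" and P: "P \<in> carrier_mat n n" and Q: "Q \<in> carrier_mat n n"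
    and QP: "Q * P = 1\<^sub>m n" and AB: "A = P * B * Q"
    by (auto simp: similar_mat_wit_def Let_def)
  have es0: "e = 0" if "e \<in> set es" for e
  proof (rule eigenvalue_nilpotent_eq_0[OF A nil])
    have "poly (char_poly A) e = 0" unfolding es using that by (induct es) (auto simp: poly_prod_list)
    then show "eigenvalue A e" using eigenvalue_root_char_poly[OF A] by simp
  qed
  have "mat_trace A = mat_trace (Q * (P * B))"
    using AB P B Q by (subst mat_trace_mult_comm[of _ n]) (auto simp: assoc_mult_mat[of P n n B n Q n])
  also have "Q * (P * B) = B" using P B Q QP by (metis assoc_mult_mat left_mult_one_mat)
  also have "mat_trace B = sum_list es"
    using B dB by (auto simp: mat_trace_def diag_mat_def sum_list_sum_nth atLeast0LessThan)
  also have "\<dots> = 0" using es0 by (induct es) auto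
  finally show ?thesis .
qed

lemma mat_trace_nilpotent_rat:
  fixes A :: "rat mat"
  assumes A: "A \<in> carrier_mat n n" and nil: "A ^\<^sub>m k = 0\<^sub>m n n"
  shows "mat_trace A = 0"
proof -
  let ?C = "map_mat (of_rat :: rat \<Rightarrow> complex) A"
  have "?C ^\<^sub>m k = map_mat of_rat (A ^\<^sub>m k)"
    by (rule of_rat_hom.mat_hom_pow[OF A, symmetric])
  also have "\<dots> = 0\<^sub>m n n" using nil by auto
  finally have "mat_trace ?C = 0" by (intro mat_trace_nilpotent_complex[of _ n]) (use A in auto)
  moreover have "mat_trace ?C = of_rat (mat_trace A)" using A by (simp add: mat_trace_def of_rat_sum)
  ultimately show ?thesis by simp
qed

section \<open>Commuting nilpotent elements\<close>

lemma power_zero_mono: "x ^ n = 0 \<Longrightarrow> n \<le> m \<Longrightarrow> (x::'a::{monoid_mult,mult_zero}) ^ m = 0"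
  by (metis le_add_diff_inverse power_add mult_zero_left)

lemma commuting_nilpotent_add_annihilates:
  fixes x y z :: "'a::ring_1"
  assumes xy: "x * y = y * x"
  shows "x ^ i * z = 0 \<Longrightarrow> y ^ j * z = 0 \<Longrightarrow> (x + y) ^ (i + j) * z = 0"
proof (induction i arbitrary: j z)
  case 0
  then show ?case by simp
next
  case (Suc i)
  note outer_IH = Suc.IH
  from Suc.prems show ?case
  proof (induction j arbitrary: z)
    case 0
    then show ?case by simp
  next
    case (Suc j)
    have x_pow: "x ^ i * (x * z) = 0" "y ^ Suc j * (x * z) = 0"
      using Suc.prems power_commuting_commutes[OF xy[symmetric], of "Suc j"]
      by (simp_all add: mult.assoc[symmetric] power_Suc2 del: power_Suc) (simp add: mult.assoc)
    have y_pow: "x ^ Suc i * (y * z) = 0" "y ^ j * (y * z) = 0"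
      using Suc.prems power_commuting_commutes[OF xy, of "Suc i"]
      by (simp_all add: mult.assoc[symmetric] power_Suc2 del: power_Suc) (simp add: mult.assoc)
    have "(x + y) ^ (Suc i + Suc j) * z = (x + y) ^ Suc (i + j) * ((x + y) * z)"
      by (simp only: add_Suc add_Suc_right power_Suc2 mult.assoc)
    also have "\<dots> = (x + y) ^ (i + Suc j) * (x * z) + (x + y) ^ (Suc i + j) * (y * z)"
      by (simp only: distrib_left distrib_right add_Suc add_Suc_right)
    also have "\<dots> = 0"
      using outer_IH[OF x_pow] Suc.IH[OF y_pow] by simp
    finally show ?case .
  qed
qed

lemma commuting_nilpotent_add:
  fixes x y :: "'a::ring_1"
  assumes "x * y = y * x" "x ^ i = 0" "y ^ j = 0"
  shows "(x + y) ^ (i + j) = 0"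
  using commuting_nilpotent_add_annihilates[OF assms(1), of i 1 j] assms(2,3) by simp

section \<open>Rings in which every nonzero integer is invertible\<close>

definition ints_invertible :: "'a::ring_1 itself \<Rightarrow> bool" where
  "ints_invertible T \<longleftrightarrow> (\<forall>n::int. n \<noteq> 0 \<longrightarrow> ring_unit (of_int n :: 'a))"

text \<open>Both are junk unless the nonzero integers are invertible, as assumed in \<open>rat_algebra\<close>.\<close>

definition int_inverse :: "int \<Rightarrow> 'a::ring_1" where
  "int_inverse n = (SOME y. of_int n * y = 1 \<and> y * of_int n = 1)"

definition ring_of_rat :: "rat \<Rightarrow> 'a::ring_1" where
  "ring_of_rat q = of_int (fst (quotient_of q)) * int_inverse (snd (quotient_of q))"

locale rat_algebra =
  fixes T :: "'a::ring_1 itself"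
  assumes ints_invertible: "ints_invertible T"
begin

lemma int_inverse:
  assumes "n \<noteq> 0"
  shows "of_int n * (int_inverse n :: 'a) = 1" "(int_inverse n :: 'a) * of_int n = 1"
proof -
  have "\<exists>y::'a. of_int n * y = 1 \<and> y * of_int n = 1"
    using ints_invertible assms unfolding ints_invertible_def ring_unit_def by auto
  then have "of_int n * (int_inverse n :: 'a) = 1 \<and> (int_inverse n :: 'a) * of_int n = 1"
    unfolding int_inverse_def by (rule someI_ex)
  then show "of_int n * (int_inverse n :: 'a) = 1" "(int_inverse n :: 'a) * of_int n = 1" by auto
qed

lemma int_inverse_commute:
  assumes "n \<noteq> 0"
  shows "(int_inverse n :: 'a) * x = x * int_inverse n"
proof -
  let ?y = "int_inverse n :: 'a"
  have "?y * x = ?y * (x * of_int n) * ?y" using int_inverse[OF assms] by (simp add: mult.assoc)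
  also have "\<dots> = (?y * of_int n) * x * ?y" by (simp add: mult_of_int_commute mult.assoc)
  also have "\<dots> = x * ?y" using int_inverse[OF assms] by simp
  finally show ?thesis .
qed

lemma int_inverse_cancel:
  assumes "d \<noteq> 0"
  shows "x * of_int d * y * (int_inverse d :: 'a) = x * y"
proof -
  have "x * of_int d * y * (int_inverse d :: 'a) = x * (of_int d * int_inverse d) * y"
    by (simp only: mult.assoc int_inverse_commute[OF assms, of y])
  then show ?thesis using int_inverse[OF assms] by simp
qed

lemma int_inverse_mult:
  assumes "n \<noteq> 0" "m \<noteq> 0"
  shows "(int_inverse (n * m) :: 'a) = int_inverse n * int_inverse m"
proof -
  have nm: "n * m \<noteq> 0" using assms by simp
  have "of_int (n * m) * (int_inverse n * int_inverse m :: 'a) = 1"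
    using int_inverse_cancel[OF assms(2), of "of_int n" "int_inverse n"] int_inverse[OF assms(1)]
    by (simp add: mult.assoc)
  then have "int_inverse (n * m) * (of_int (n * m) * (int_inverse n * int_inverse m))
      = (int_inverse (n * m) :: 'a)"
    by simp
  then show ?thesis using int_inverse(2)[OF nm] by (simp add: mult.assoc[symmetric])
qed

lemma ring_of_rat_fraction:
  assumes "d \<noteq> 0"
  shows "(ring_of_rat (of_int a / of_int d) :: 'a) = of_int a * int_inverse d"
proof -
  obtain p r where pr: "quotient_of (of_int a / of_int d) = (p, r)"
    by (cases "quotient_of (of_int a / of_int d)")
  have r: "r \<noteq> 0" using quotient_of_denom_pos[OF pr] by simp
  have "of_int a / of_int d = (of_int p / of_int r :: rat)" using quotient_of_div[OF pr] .
  then have ar: "a * r = p * d" using r assms by (simp add: frac_eq_eq) (metis of_int_eq_iff of_int_mult)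
  have "of_int p * (int_inverse r :: 'a) = of_int p * int_inverse r * (of_int d * int_inverse d)"
    using int_inverse[OF assms] by simp
  also have "\<dots> = of_int p * (int_inverse r * of_int d) * (int_inverse d :: 'a)"
    by (simp only: mult.assoc)
  also have "int_inverse r * of_int d = of_int d * (int_inverse r :: 'a)"
    by (rule int_inverse_commute[OF r])
  also have "of_int p * (of_int d * int_inverse r) * int_inverse d
      = of_int (a * r) * int_inverse r * (int_inverse d :: 'a)"
    by (simp only: ar mult.assoc of_int_mult)
  also have "\<dots> = of_int a * (of_int r * int_inverse r) * int_inverse d"
    by (simp add: ar[symmetric] mult.assoc)
  also have "\<dots> = of_int a * int_inverse d" using int_inverse[OF r] by simp
  finally show ?thesis unfolding ring_of_rat_def pr by simp
qed

lemma rat_as_fraction: obtains a d where "d \<noteq> 0" "(q::rat) = of_int a / of_int d"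
proof -
  obtain a d where ad: "quotient_of q = (a, d)" by (cases "quotient_of q")
  show ?thesis
    by (rule that[of d a]) (use quotient_of_denom_pos[OF ad] quotient_of_div[OF ad] in auto)
qed

lemma ring_of_rat_commute: "(ring_of_rat q :: 'a) * x = x * ring_of_rat q"
proof -
  obtain a d where ad: "d \<noteq> 0" "q = of_int a / of_int d" by (rule rat_as_fraction)
  have "of_int a * int_inverse d * x = of_int a * (x * (int_inverse d :: 'a))"
    by (simp only: mult.assoc int_inverse_commute[OF ad(1)])
  also have "\<dots> = (of_int a * x) * int_inverse d" by (simp only: mult.assoc)
  also have "of_int a * x = x * of_int a" by (rule mult_of_int_commute)
  finally show ?thesis unfolding ad(2) ring_of_rat_fraction[OF ad(1)] by (simp only: mult.assoc)
qed

lemma ring_of_rat_add: "(ring_of_rat (x + y) :: 'a) = ring_of_rat x + ring_of_rat y"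
proof -
  obtain a b where ab: "b \<noteq> 0" "x = of_int a / of_int b" by (rule rat_as_fraction)
  obtain c d where cd: "d \<noteq> 0" "y = of_int c / of_int d" by (rule rat_as_fraction)
  have e: "x + y = of_int (a * d + c * b) / of_int (b * d)" using ab cd by (simp add: field_simps)
  have "(ring_of_rat (x + y) :: 'a) = of_int (a * d + c * b) * int_inverse (b * d)"
    unfolding e by (rule ring_of_rat_fraction) (use ab cd in simp)
  also have "\<dots> = of_int a * of_int d * int_inverse b * int_inverse d
      + of_int c * of_int b * int_inverse b * int_inverse d"
    by (simp only: int_inverse_mult[OF ab(1) cd(1)] of_int_add of_int_mult distrib_right mult.assoc)
  also have "of_int a * of_int d * int_inverse b * int_inverse d = of_int a * (int_inverse b :: 'a)"
    by (rule int_inverse_cancel[OF cd(1)])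
  also have "of_int c * of_int b * int_inverse b * int_inverse d = of_int c * (int_inverse d :: 'a)"
    using int_inverse[OF ab(1)] by (simp add: mult.assoc)
  finally show ?thesis using ab cd by (simp add: ring_of_rat_fraction)
qed

lemma ring_of_rat_mult: "(ring_of_rat (x * y) :: 'a) = ring_of_rat x * ring_of_rat y"
proof -
  obtain a b where ab: "b \<noteq> 0" "x = of_int a / of_int b" by (rule rat_as_fraction)
  obtain c d where cd: "d \<noteq> 0" "y = of_int c / of_int d" by (rule rat_as_fraction)
  have e: "x * y = of_int (a * c) / of_int (b * d)" using ab cd by simp
  have "(ring_of_rat (x * y) :: 'a) = of_int (a * c) * int_inverse (b * d)"
    unfolding e by (rule ring_of_rat_fraction) (use ab cd in simp)
  also have "\<dots> = of_int a * (of_int c * int_inverse b) * int_inverse d"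
    by (simp only: int_inverse_mult[OF ab(1) cd(1)] of_int_mult mult.assoc)
  also have "of_int c * int_inverse b = (int_inverse b :: 'a) * of_int c"
    by (rule int_inverse_commute[OF ab(1), symmetric])
  finally show ?thesis using ab cd by (simp add: ring_of_rat_fraction mult.assoc)
qed

lemma ring_of_rat_of_int: "(ring_of_rat (of_int k) :: 'a) = of_int k"
  using ring_of_rat_fraction[of 1 k] int_inverse[of 1] by simp

sublocale Q: vector_space "\<lambda>q (x::'a). ring_of_rat q * x"
proof (unfold_locales)
  show "ring_of_rat a * (x + y) = ring_of_rat a * x + ring_of_rat a * y" for a and x y :: 'a
    by (rule distrib_left)
  show "ring_of_rat (a + b) * x = ring_of_rat a * x + ring_of_rat b * (x::'a)" for a b x
    by (simp only: ring_of_rat_add distrib_right)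
  show "ring_of_rat a * (ring_of_rat b * x) = ring_of_rat (a * b) * (x::'a)" for a b x
    by (simp only: ring_of_rat_mult mult.assoc)
  show "ring_of_rat 1 * x = (x::'a)" for x
    using ring_of_rat_of_int[of 1] by simp
qed

lemma span_mult_closed:
  assumes "\<And>x. x \<in> S \<Longrightarrow> y * x * z \<in> Q.span S'" and "v \<in> Q.span S"
  shows "y * v * z \<in> Q.span S'"
proof -
  have "Q.subspace {v. y * v * z \<in> Q.span S'}"
  proof (rule Q.subspaceI)
    fix q and x :: 'a assume "x \<in> {v. y * v * z \<in> Q.span S'}"
    moreover have "y * (ring_of_rat q * x) * z = (y * ring_of_rat q) * x * z"
      by (simp only: mult.assoc)
    moreover have "y * ring_of_rat q = ring_of_rat q * y"
      by (rule ring_of_rat_commute[symmetric])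
    ultimately show "ring_of_rat q * x \<in> {v. y * v * z \<in> Q.span S'}"
      by (simp add: Q.span_scale mult.assoc)
  qed (auto simp: distrib_left distrib_right Q.span_add Q.span_zero)
  then show ?thesis using Q.span_induct[OF assms(2)] assms(1) by blast
qed

lemma of_int_mult_in_span: "x \<in> Q.span S \<Longrightarrow> of_int k * x \<in> Q.span S"
  using Q.span_scale[of x S "of_int k"] by (simp add: ring_of_rat_of_int)

end

section \<open>Finite-dimensional left regular representations\<close>

definition left_mult_stable :: "'a::ring_1 set \<Rightarrow> 'a \<Rightarrow> bool" where
  "left_mult_stable S y \<longleftrightarrow> (\<forall>v\<in>S. y * v \<in> S)"

lemma left_mult_stable_one: "left_mult_stable S 1"
  by (simp add: left_mult_stable_def)

lemma left_mult_stable_mult: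
  "left_mult_stable S y \<Longrightarrow> left_mult_stable S z \<Longrightarrow> left_mult_stable S (y * z)"
  by (simp add: left_mult_stable_def mult.assoc)

lemma left_mult_stable_power: "left_mult_stable S y \<Longrightarrow> left_mult_stable S (y ^ k)"
  by (induct k) (simp_all add: left_mult_stable_one left_mult_stable_mult)

context rat_algebra
begin

lemma left_mult_stable_span_add:
  "left_mult_stable (Q.span W) y \<Longrightarrow> left_mult_stable (Q.span W) z \<Longrightarrow>
    left_mult_stable (Q.span W) (y + z)"
  by (simp add: left_mult_stable_def distrib_right Q.span_add)

lemma left_mult_stable_span_diff:
  "left_mult_stable (Q.span W) y \<Longrightarrow> left_mult_stable (Q.span W) z \<Longrightarrow>
    left_mult_stable (Q.span W) (y - z)"
  by (simp add: left_mult_stable_def left_diff_distrib Q.span_diff)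

lemma finite_span_basis:
  assumes "finite W"
  obtains us where "distinct us" "Q.independent (set us)" "Q.span (set us) = Q.span W"
proof -
  obtain B where B: "B \<subseteq> Q.span W" "Q.independent B" "Q.span W \<subseteq> Q.span B"
    using Q.maximal_independent_subset[of "Q.span W"] by blast
  have "finite B" using Q.independent_span_bound[OF assms B(2)] B(1) by auto
  then obtain us where "set us = B" "distinct us" using finite_distinct_list by auto
  moreover have "Q.span B = Q.span W"
    using Q.span_mono[OF B(1)] B(3) by (auto simp: Q.span_span)
  ultimately show ?thesis using that B(2) by blast
qed

lemma sum_representation_list:
  assumes "Q.independent (set us)" "distinct us" "v \<in> Q.span (set us)"
  shows "v = (\<Sum>k<length us. ring_of_rat (Q.representation (set us) v (us ! k)) * us ! k)"
proof -
  have "v = (\<Sum>b\<in>set us. ring_of_rat (Q.representation (set us) v b) * b)"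
    using Q.sum_representation_eq[OF assms(1) assms(3) _ order_refl] by simp
  also have "\<dots> = (\<Sum>b\<leftarrow>us. ring_of_rat (Q.representation (set us) v b) * b)"
    by (rule sum.distinct_set_conv_list[OF assms(2)])
  finally show ?thesis by (simp add: sum_list_sum_nth atLeast0LessThan)
qed

lemma representation_lincomb:
  assumes "Q.independent B" "\<And>k. k < n \<Longrightarrow> w k \<in> Q.span B"
  shows "Q.representation B (\<Sum>k<n. ring_of_rat (c k) * w k) b
    = (\<Sum>k<n. c k * Q.representation B (w k) b)"
  using assms
  by (subst Q.representation_sum[OF assms(1)])
    (auto intro: Q.span_scale intro!: sum.cong simp: Q.representation_scale[OF assms(1)])

lemma left_regular_representation:
  assumes "finite W"
  obtains M :: "'a \<Rightarrow> rat mat" and d :: nat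
  where "\<And>y. M y \<in> carrier_mat d d" and "M 1 = 1\<^sub>m d" and "M 0 = 0\<^sub>m d d"
    and "\<And>y z. left_mult_stable (Q.span W) y \<Longrightarrow> left_mult_stable (Q.span W) z \<Longrightarrow>
           M (y * z) = M y * M z"
    and "\<And>y z. left_mult_stable (Q.span W) y \<Longrightarrow> left_mult_stable (Q.span W) z \<Longrightarrow>
           M (y + z) = M y + M z"
    and "d = 0 \<Longrightarrow> Q.span W = {0}"
proof -
  obtain us where us: "distinct us" "Q.independent (set us)" "Q.span (set us) = Q.span W"
    by (rule finite_span_basis[OF assms])
  define d where "d = length us"
  define R where "R v i = Q.representation (set us) v (us ! i)" for v i
  define M where "M y = mat d d (\<lambda>(i,j). R (y * us ! j) i)" for y
  have u: "us ! k \<in> Q.span W" if "k < d" for k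
    using that us(3) Q.span_base[of "us ! k" "set us"] by (simp add: d_def)
  show ?thesis
  proof (rule that[of M d])
    show "M y \<in> carrier_mat d d" for y by (simp add: M_def)
    show "M 1 = 1\<^sub>m d"
      using us(1,2) by (intro eq_matI)
        (auto simp: M_def R_def d_def Q.representation_basis nth_eq_iff_index_eq)
    show "M 0 = 0\<^sub>m d d" by (rule eq_matI) (auto simp: M_def R_def Q.representation_zero)
    show "d = 0 \<Longrightarrow> Q.span W = {0}" using us(3) by (simp add: d_def)
  next
    fix y z assume y: "left_mult_stable (Q.span W) y" and z: "left_mult_stable (Q.span W) z"
    have yu: "y * us ! k \<in> Q.span (set us)" and zu: "z * us ! k \<in> Q.span (set us)"
      if "k < d" for k
      using y z u[OF that] us(3) by (auto simp: left_mult_stable_def)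
    show "M (y + z) = M y + M z"
      by (rule eq_matI) (auto simp: M_def R_def distrib_right Q.representation_add[OF us(2)] yu zu)
    show "M (y * z) = M y * M z"
    proof (rule eq_matI)
      fix i j assume "i < dim_row (M y * M z)" "j < dim_col (M y * M z)"
      then have i: "i < d" and j: "j < d" by (auto simp: M_def)
      have "y * z * us ! j = y * (\<Sum>k<d. ring_of_rat (R (z * us ! j) k) * us ! k)"
        using sum_representation_list[OF us(2,1) zu[OF j]] by (simp add: mult.assoc R_def d_def)
      also have "\<dots> = (\<Sum>k<d. ring_of_rat (R (z * us ! j) k) * (y * us ! k))"
        unfolding sum_distrib_left
        by (rule sum.cong[OF refl]) (simp only: mult.assoc[symmetric] ring_of_rat_commute[of _ y])
      finally have "M (y * z) $$ (i,j) = (\<Sum>k<d. R (z * us ! j) k * R (y * us ! k) i)"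
        using i j yu by (simp add: M_def R_def representation_lincomb[OF us(2)])
      also have "\<dots> = (M y * M z) $$ (i,j)"
        using i j by (simp add: M_def scalar_prod_def atLeast0LessThan mult.commute)
      finally show "M (y * z) $$ (i,j) = (M y * M z) $$ (i,j)" .
    qed (auto simp: M_def)
  qed
qed

lemma no_nilpotent_partition_of_unity_on_finite_span:
  assumes nontrivial: "(1::'a) \<noteq> 0" and W: "finite W" "1 \<in> Q.span W"
    and I: "finite I" "(\<Sum>i\<in>I. x i) = 1"
    and stable: "\<And>i. i \<in> I \<Longrightarrow> left_mult_stable (Q.span W) (x i)"
    and nilpotent: "\<And>i. i \<in> I \<Longrightarrow> \<exists>k. x i ^ k = 0"
  shows False
proof (rule left_regular_representation[OF W(1)])
  fix M :: "'a \<Rightarrow> rat mat" and d :: nat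
  assume M: "\<And>y. M y \<in> carrier_mat d d"
    and M_one: "M 1 = 1\<^sub>m d" and M_zero: "M 0 = 0\<^sub>m d d"
    and M_mult: "\<And>y z. left_mult_stable (Q.span W) y \<Longrightarrow> left_mult_stable (Q.span W) z \<Longrightarrow>
           M (y * z) = M y * M z"
    and M_add: "\<And>y z. left_mult_stable (Q.span W) y \<Longrightarrow> left_mult_stable (Q.span W) z \<Longrightarrow>
           M (y + z) = M y + M z"
    and trivial: "d = 0 \<Longrightarrow> Q.span W = {0}"
  have M_power: "M (y ^ k) = M y ^\<^sub>m k" if "left_mult_stable (Q.span W) y" for y k
    by (induct k) (simp_all add: M_one M_mult[OF left_mult_stable_power[OF that] that] power_Suc2
        carrier_matD[OF M] del: power_Suc)
  have nilpotent_trace: "mat_trace (M (x i)) = 0" if i: "i \<in> I" for i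
  proof -
    obtain k where k: "x i ^ k = 0" using nilpotent[OF i] by blast
    have "M (x i) ^\<^sub>m k = M (x i ^ k)" by (rule M_power[OF stable[OF i], symmetric])
    also have "\<dots> = 0\<^sub>m d d" using k M_zero by simp
    finally show ?thesis by (rule mat_trace_nilpotent_rat[OF M])
  qed
  have "left_mult_stable (Q.span W) (\<Sum>i\<in>F. x i) \<and> mat_trace (M (\<Sum>i\<in>F. x i)) = 0"
    if "F \<subseteq> I" for F
    using finite_subset[OF that I(1)] that
  proof (induction F rule: finite_induct)
    case empty
    then show ?case by (simp add: left_mult_stable_def Q.span_zero M_zero mat_trace_def)
  next
    case (insert i F)
    then have i: "i \<in> I" and IH: "left_mult_stable (Q.span W) (\<Sum>i\<in>F. x i)"
        "mat_trace (M (\<Sum>i\<in>F. x i)) = 0"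
      by auto
    have "mat_trace (M (x i + (\<Sum>i\<in>F. x i))) = 0"
      using M_add[OF stable[OF i] IH(1)] mat_trace_add[OF M M] IH(2) nilpotent_trace[OF i] by simp
    then show ?case
      using insert.hyps left_mult_stable_span_add[OF stable[OF i] IH(1)] by simp
  qed
  from this[of I] have "mat_trace (M 1) = 0" using I(2) by simp
  then have "d = 0" by (simp add: M_one mat_trace_one)
  then show False using trivial W(2) nontrivial by simp
qed

end

section \<open>Words in two letters\<close>

datatype letter = B | C

definition word_eval :: "'a::ring_1 \<Rightarrow> 'a \<Rightarrow> letter list \<Rightarrow> 'a" where
  "word_eval b c w = prod_list (map (case_letter b c) w)"

lemma word_eval_Nil [simp]: "word_eval b c [] = 1"
  and word_eval_Cons [simp]: "word_eval b c (l # w) = case_letter b c l * word_eval b c w"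
  by (simp_all add: word_eval_def)

lemma word_eval_append: "word_eval b c (u @ v) = word_eval b c u * word_eval b c v"
  by (simp add: word_eval_def)

definition lc_eval :: "'a::ring_1 \<Rightarrow> 'a \<Rightarrow> (int \<times> letter list) list \<Rightarrow> 'a" where
  "lc_eval b c xs = (\<Sum>(k, w)\<leftarrow>xs. of_int k * word_eval b c w)"

lemma lc_eval_Nil [simp]: "lc_eval b c [] = 0"
  and lc_eval_Cons [simp]: "lc_eval b c ((k, w) # xs) = of_int k * word_eval b c w + lc_eval b c xs"
  by (simp_all add: lc_eval_def)

fun binary_value :: "letter list \<Rightarrow> nat" where
  "binary_value [] = 0"
| "binary_value (l # w) = (case l of B \<Rightarrow> 0 | C \<Rightarrow> 2 ^ length w) + binary_value w"

lemma binary_value_append: "binary_value (u @ v) = binary_value u * 2 ^ length v + binary_value v"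
  by (induct u) (auto simp: power_add algebra_simps split: letter.split)

lemma binary_value_infix_less:
  assumes "length u = length L" "binary_value u < binary_value L"
  shows "binary_value (p @ u @ q) < binary_value (p @ L @ q)"
  using assms by (simp add: binary_value_append)

text \<open>The rules \<open>Lk \<mapsto> -Rk\<close> come from a Groebner basis of the relations \<open>b\<^sup>3 = 0\<close>, \<open>c\<^sup>5 = 0\<close>
  and \<open>(b + c - 1)\<^sup>2 = s\<close> with \<open>s\<close> central: \<open>Lk\<close> is the leading word of \<open>Pk = Lk + Rk\<close> in the
  degree-lexicographic order with \<open>B < C\<close>, and \<open>Pk\<close> vanishes modulo terms of lower degree,
  \<open>s\<close> counting as one letter (\<open>Pk_in\<close> below). \<open>normal_words\<close> lists the words containing no \<open>Lk\<close>.\<close>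

definition "L0 = [B,B,B]"
definition "R0 = []"
definition "L1 = [C,C,C,C,C]"
definition "R1 = []"
definition "L2 = [C,C]"
definition "R2 = [(1,[B,B]), (1,[B,C]), (1,[C,B])]"
definition "L3 = [C,B,C,B,C]"
definition "R3 = [(-1,[C,B,B,C,B]), (-1,[B,C,B,C,B]), (-1,[B,C,B,B,C])]"
definition "L4 = [C,B,C,B,B,C]"
definition "R4 =
  [(1, [C,B,B,C,B,C]), (1, [C,B,B,C,B,B]), (1, [B,C,B,C,B,B]), (1, [B,C,B,B,C,B]),
   (1, [B,B,C,B,C,B]), (1, [B,B,C,B,B,C])]"
definition "L5 = [C,B,B,C,B,B,C,B,C,B]"
definition "R5 =
  [(1, [C,B,B,C,B,B,C,B,B,C]), (1, [B,C,B,B,C,B,B,C,B,C]),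
   (-1, [B,B,C,B,B,C,B,B,C,B])]"
definition "L6 = [C,B,B,C,B,B,C,B,B,C,B,B]"
definition "R6 = [(-1,[B,C,B,B,C,B,B,C,B,B,C,B]), (1,[B,B,C,B,B,C,B,B,C,B,B,C])]"

definition "P0 = (1, L0) # R0"
definition "P1 = (1, L1) # R1"
definition "P2 = (1, L2) # R2"
definition "P3 = (1, L3) # R3"
definition "P4 = (1, L4) # R4"
definition "P5 = (1, L5) # R5"
definition "P6 = (1, L6) # R6"

lemmas relation_defs =
  L0_def R0_def P0_def L1_def R1_def P1_def L2_def R2_def P2_def L3_def R3_def P3_def
  L4_def R4_def P4_def L5_def R5_def P5_def L6_def R6_def P6_def

definition reduction_rules :: "(letter list \<times> (int \<times> letter list) list) list" where
  "reduction_rules = [(L0, R0), (L1, R1), (L2, R2), (L3, R3), (L4, R4), (L5, R5), (L6, R6)]"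

lemma reduction_rules_decreasing:
  "(L, R) \<in> set reduction_rules \<Longrightarrow> (a, u) \<in> set R \<Longrightarrow>
     length u = length L \<and> binary_value u < binary_value L"
  by (auto simp: reduction_rules_def relation_defs)

definition normal :: "letter list \<Rightarrow> bool" where
  "normal w \<longleftrightarrow> (\<forall>(L, R)\<in>set reduction_rules. \<not> sublist L w)"

definition normal_words :: "letter list list" where
  "normal_words =
  [[], [B], [C], [B,B], [B,C], [C,B], [B,B,C], [B,C,B], [C,B,B], [C,B,C], [B,B,C,B],
     [B,C,B,B], [B,C,B,C], [C,B,B,C], [C,B,C,B], [B,B,C,B,B], [B,B,C,B,C], [B,C,B,B,C],
     [B,C,B,C,B], [C,B,B,C,B], [C,B,C,B,B], [B,B,C,B,B,C], [B,B,C,B,C,B], [B,C,B,B,C,B],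
     [B,C,B,C,B,B], [C,B,B,C,B,B], [C,B,B,C,B,C], [B,B,C,B,B,C,B], [B,B,C,B,C,B,B],
     [B,C,B,B,C,B,B], [B,C,B,B,C,B,C], [C,B,B,C,B,B,C], [C,B,B,C,B,C,B], [B,B,C,B,B,C,B,B],
     [B,B,C,B,B,C,B,C], [B,C,B,B,C,B,B,C], [B,C,B,B,C,B,C,B], [C,B,B,C,B,B,C,B],
     [C,B,B,C,B,C,B,B], [B,B,C,B,B,C,B,B,C], [B,B,C,B,B,C,B,C,B], [B,C,B,B,C,B,B,C,B],
     [B,C,B,B,C,B,C,B,B], [C,B,B,C,B,B,C,B,B], [C,B,B,C,B,B,C,B,C], [B,B,C,B,B,C,B,B,C,B],
     [B,B,C,B,B,C,B,C,B,B], [B,C,B,B,C,B,B,C,B,B], [B,C,B,B,C,B,B,C,B,C],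
     [C,B,B,C,B,B,C,B,B,C], [B,B,C,B,B,C,B,B,C,B,B], [B,B,C,B,B,C,B,B,C,B,C],
     [B,C,B,B,C,B,B,C,B,B,C], [C,B,B,C,B,B,C,B,B,C,B], [B,B,C,B,B,C,B,B,C,B,B,C],
     [B,C,B,B,C,B,B,C,B,B,C,B], [C,B,B,C,B,B,C,B,B,C,B,C], [B,B,C,B,B,C,B,B,C,B,B,C,B],
     [B,C,B,B,C,B,B,C,B,B,C,B,C], [B,B,C,B,B,C,B,B,C,B,B,C,B,C]]"

lemma all_letter_iff: "(\<forall>l. P l) \<longleftrightarrow> P B \<and> P C"
  by (metis letter.exhaust)

lemma normal_words_closed:
  "\<forall>w\<in>set normal_words. \<forall>l. normal (l # w) \<longrightarrow> l # w \<in> set normal_words"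
  by (simp add: normal_words_def normal_def reduction_rules_def relation_defs sublist_Cons_right
      all_letter_iff)

lemma normal_in_normal_words: "normal w \<Longrightarrow> w \<in> set normal_words"
proof (induct w)
  case Nil
  then show ?case by (simp add: normal_words_def)
next
  case (Cons l w)
  then have "normal w" by (auto simp: normal_def sublist_Cons_right)
  then show ?case using Cons normal_words_closed by blast
qed

section \<open>Normal forms modulo the relations\<close>

locale nilpotent_relations = rat_algebra T for T :: "'a::ring_1 itself" +
  fixes b c s :: 'a
  assumes b_cube: "b ^ 3 = 0" and c_fifth: "c ^ 5 = 0" and square: "(b + c - 1) ^ 2 = s"
    and s_central: "\<And>y. s * y = y * s" and s_cube: "s ^ 3 = 0"
begin

abbreviation wd :: "letter list \<Rightarrow> 'a" where "wd \<equiv> word_eval b c"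

abbreviation lc :: "(int \<times> letter list) list \<Rightarrow> 'a" where "lc \<equiv> lc_eval b c"

definition span_below :: "nat \<Rightarrow> 'a set" where
  "span_below d = Q.span {s ^ j * wd w | j w. j + length w < d}"

lemma s_power_commute: "s ^ j * y = y * s ^ j"
  using power_commuting_commutes s_central by metis

lemma span_below_add: "x \<in> span_below d \<Longrightarrow> y \<in> span_below d \<Longrightarrow> x + y \<in> span_below d"
  and span_below_diff: "x \<in> span_below d \<Longrightarrow> y \<in> span_below d \<Longrightarrow> x - y \<in> span_below d"
  and span_below_uminus: "x \<in> span_below d \<Longrightarrow> - x \<in> span_below d"
  and span_below_zero: "0 \<in> span_below d"
  by (simp_all add: span_below_def Q.span_add Q.span_diff Q.span_neg Q.span_zero)

lemma word_in_span_below: "j + length w < d \<Longrightarrow> s ^ j * wd w \<in> span_below d"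
  unfolding span_below_def by (rule Q.span_base) blast

lemma mult_span_below:
  assumes "x \<in> span_below d" "d + length p + length q \<le> d'"
  shows "wd p * x * wd q \<in> span_below d'"
  using assms(1) unfolding span_below_def
proof (rule span_mult_closed[rotated])
  fix y assume "y \<in> {s ^ j * wd w | j w. j + length w < d}"
  then obtain j w where y: "y = s ^ j * wd w" "j + length w < d" by blast
  have "wd p * y * wd q = (wd p * s ^ j) * wd w * wd q" by (simp add: y mult.assoc)
  also have "wd p * s ^ j = s ^ j * wd p" by (rule s_power_commute[symmetric])
  finally have "wd p * y * wd q = s ^ j * wd (p @ w @ q)" by (simp add: word_eval_append mult.assoc)
  then show "wd p * y * wd q \<in> Q.span {s ^ j * wd w | j w. j + length w < d'}"
    using y(2) assms(2) word_in_span_below[of j "p @ w @ q" d'] by (simp add: span_below_def)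
qed

lemma s_power_mult_span_below:
  assumes "x \<in> span_below d"
  shows "s ^ i * x \<in> span_below (d + i)"
proof -
  have "s ^ i * x * 1 \<in> span_below (d + i)"
    using assms unfolding span_below_def
  proof (rule span_mult_closed[rotated])
    fix y assume "y \<in> {s ^ j * wd w | j w. j + length w < d}"
    then obtain j w where y: "y = s ^ j * wd w" "j + length w < d" by blast
    then have "s ^ i * y * 1 = s ^ (i + j) * wd w" by (simp add: power_add mult.assoc)
    then show "s ^ i * y * 1 \<in> Q.span {s ^ j * wd w | j w. j + length w < d + i}"
      using y(2) word_in_span_below[of "i + j" w "d + i"] by (simp add: span_below_def)
  qed
  then show ?thesis by simp
qed

lemma P0_in: "lc P0 \<in> span_below (length L0)"
  using b_cube span_below_zero by (simp add: relation_defs power3_eq_cube mult.assoc)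

lemma P1_in: "lc P1 \<in> span_below (length L1)"
  using c_fifth span_below_zero by (simp add: relation_defs eval_nat_numeral mult.assoc)

lemma P2_in: "lc P2 \<in> span_below (length L2)"
proof -
  have "lc P2 = s ^ 1 * wd [] + s ^ 0 * wd [B] + s ^ 0 * wd [B] + s ^ 0 * wd [C] + s ^ 0 * wd [C]
      - s ^ 0 * wd []"
    using square by (simp add: relation_defs power2_eq_square algebra_simps)
  then show ?thesis
    by (simp only:) (intro span_below_add span_below_diff word_in_span_below; simp add: L2_def)
qed

lemma P3_eq:
  "lc P3 =
      (wd [] * lc P1 * wd [])
    - (wd [] * lc P2 * wd [C,C,C])
    + (wd [C,B] * lc P2 * wd [C])
    - (wd [C,B,B] * lc P2 * wd [])
    + (wd [C] * lc P0 * wd [B])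
    + (wd [B] * lc P2 * wd [C,C])
    - (wd [B,C,B] * lc P2 * wd [])
    + (wd [B,C] * lc P0 * wd [])
    - (wd [] * lc P0 * wd [C,C])"
  by (simp add: relation_defs algebra_simps)

lemma P3_in: "lc P3 \<in> span_below (length L3)"
  unfolding P3_eq
  by (intro span_below_add span_below_diff span_below_uminus;
      rule mult_span_below[OF P0_in] mult_span_below[OF P1_in]
        mult_span_below[OF P2_in];
      simp add: relation_defs)

lemma P4_eq:
  "lc P4 =
      - (wd [] * lc P1 * wd [C])
    + (wd [C,C,C,C] * lc P2 * wd [])
    - (wd [] * lc P1 * wd [B])
    - (wd [] * lc P2 * wd [C,C,B,C])
    - (wd [] * lc P2 * wd [C,C,B,B])
    + (wd [C,B] * lc P2 * wd [B,C])
    + (wd [C,B] * lc P2 * wd [B,B])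
    - (wd [C,B,C] * lc P0 * wd [])
    - (wd [C] * lc P0 * wd [B,C])
    - (wd [C] * lc P0 * wd [B,B])
    + (wd [B] * lc P2 * wd [C,B,C])
    + (wd [B] * lc P2 * wd [C,B,B])
    - (wd [B] * lc P3 * wd [])
    - (wd [] * lc P0 * wd [C,B,C])
    - (wd [] * lc P0 * wd [C,B,B])"
  by (simp add: relation_defs algebra_simps)

lemma P4_in: "lc P4 \<in> span_below (length L4)"
  unfolding P4_eq
  by (intro span_below_add span_below_diff span_below_uminus;
      rule mult_span_below[OF P0_in] mult_span_below[OF P1_in]
        mult_span_below[OF P2_in] mult_span_below[OF P3_in];
      simp add: relation_defs)

lemma P5_eq:
  "lc P5 =
      - (wd [] * lc P1 * wd [B,C,B,B,C])
    + (wd [C,C,C,C] * lc P4 * wd [])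
    - (wd [] * lc P1 * wd [B,B,C,B,C])
    - (wd [] * lc P1 * wd [B,B,C,B,B])
    - (wd [] * lc P2 * wd [C,C,B,C,B,C,B,B])
    - (wd [] * lc P2 * wd [C,C,B,C,B,B,C,B])
    - (wd [] * lc P2 * wd [C,C,B,B,C,B,C,B])
    - (wd [] * lc P2 * wd [C,C,B,B,C,B,B,C])
    + (wd [C,B] * lc P2 * wd [B,C,B,C,B,B])
    + (wd [C,B] * lc P2 * wd [B,C,B,B,C,B])
    + (wd [C,B] * lc P2 * wd [B,B,C,B,C,B])
    + (wd [C,B] * lc P2 * wd [B,B,C,B,B,C])
    - (wd [] * lc P4 * wd [B,C,B,B])
    - (wd [] * lc P4 * wd [B,B,C,B])
    - (wd [C,B,C] * lc P0 * wd [C,B,C,B])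
    - (wd [C,B,C] * lc P0 * wd [C,B,B,C])
    + (wd [C,B,B,C] * lc P0 * wd [C,B,B])
    + (wd [C,B,B,C] * lc P0 * wd [B,C,B])
    - (wd [C] * lc P0 * wd [B,C,B,C,B,B])
    - (wd [C] * lc P0 * wd [B,C,B,B,C,B])
    - (wd [C] * lc P0 * wd [B,B,C,B,C,B])
    - (wd [C] * lc P0 * wd [B,B,C,B,B,C])
    + (wd [B] * lc P2 * wd [C,B,C,B,C,B,B])
    + (wd [B] * lc P2 * wd [C,B,C,B,B,C,B])
    + (wd [B] * lc P2 * wd [C,B,B,C,B,C,B])
    + (wd [B] * lc P2 * wd [C,B,B,C,B,B,C])
    - (wd [B] * lc P3 * wd [B,C,B,B])
    - (wd [B] * lc P3 * wd [B,B,C,B])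
    - (wd [B] * lc P4 * wd [B,C,B])
    - (wd [B] * lc P4 * wd [B,B,C])
    + (wd [B,C,B,C] * lc P0 * wd [C,B,B])
    + (wd [B,C,B,C] * lc P0 * wd [B,C,B])
    + (wd [B,C,B,B] * lc P3 * wd [B])
    + (wd [B,C,B,B] * lc P4 * wd [])
    + (wd [B,C,B,B,C] * lc P0 * wd [C,B])
    + (wd [B,C,B,B,C] * lc P0 * wd [B,C])
    - (wd [B,C] * lc P0 * wd [B,C,B,C,B])
    - (wd [B,C] * lc P0 * wd [B,C,B,B,C])
    + (wd [B,B,C,B,C] * lc P0 * wd [C,B])
    + (wd [B,B,C,B,C] * lc P0 * wd [B,C])
    + (wd [B,B,C,B,B,C] * lc P0 * wd [C])
    - (wd [] * lc P0 * wd [C,B,C,B,C,B,B])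
    + (wd [] * lc P0 * wd [C,B,C,B,B,B,C])"
  by (simp add: relation_defs algebra_simps)

lemma P5_in: "lc P5 \<in> span_below (length L5)"
  unfolding P5_eq
  by (intro span_below_add span_below_diff span_below_uminus;
      rule mult_span_below[OF P0_in] mult_span_below[OF P1_in]
        mult_span_below[OF P2_in] mult_span_below[OF P3_in]
        mult_span_below[OF P4_in];
      simp add: relation_defs)

lemma P6_eq:
  "lc P6 =
      (wd [] * lc P5 * wd [B,B])
    - (wd [C,B,B,C,B,B,C,B,C] * lc P0 * wd [])
    - (wd [B] * lc P5 * wd [B])
    + (wd [B,B] * lc P5 * wd [])
    + (wd [B,B,C,B,B,C,B,B,C] * lc P0 * wd [])
    - (wd [] * lc P0 * wd [C,B,B,C,B,B,C,B,C])
    - (wd [] * lc P0 * wd [C,B,B,C,B,B,C,B,B])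
    + (wd [] * lc P0 * wd [B,C,B,B,C,B,B,C,B])"
  by (simp add: relation_defs algebra_simps)

lemma P6_in: "lc P6 \<in> span_below (length L6)"
  unfolding P6_eq
  by (intro span_below_add span_below_diff span_below_uminus;
      rule mult_span_below[OF P0_in] mult_span_below[OF P1_in]
        mult_span_below[OF P2_in] mult_span_below[OF P3_in]
        mult_span_below[OF P4_in] mult_span_below[OF P5_in];
      simp add: relation_defs)

lemma reduction_rules_in_span_below:
  "(L, R) \<in> set reduction_rules \<Longrightarrow> wd L + lc R \<in> span_below (length L)"
  using P0_in P1_in P2_in P3_in P4_in P5_in P6_in
  by (auto simp: reduction_rules_def P0_def P1_def P2_def P3_def P4_def P5_def P6_def)

definition normal_monomials :: "'a set" where
  "normal_monomials = {s ^ j * wd w | j w. j < 3 \<and> normal w}"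

lemma finite_normal_monomials: "finite normal_monomials"
proof (rule finite_subset)
  show "normal_monomials \<subseteq> (\<lambda>(j, w). s ^ j * wd w) ` ({..<3} \<times> set normal_words)"
    using normal_in_normal_words by (fastforce simp: normal_monomials_def)
qed simp

lemma sandwich_lc_in_span:
  assumes "\<And>a u. (a, u) \<in> set R \<Longrightarrow> s ^ j * wd (p @ u @ q) \<in> Q.span N"
  shows "s ^ j * (wd p * lc R * wd q) \<in> Q.span N"
  using assms
proof (induct R)
  case Nil
  then show ?case by (simp add: Q.span_zero)
next
  case (Cons au R)
  obtain a u where au: "au = (a, u)" by (cases au)
  have "s ^ j * (wd p * lc (au # R) * wd q)
      = s ^ j * (wd p * of_int a * wd u * wd q) + s ^ j * (wd p * lc R * wd q)"
    by (simp add: au distrib_left distrib_right mult.assoc)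
  also have "wd p * of_int a = of_int a * wd p" by (rule mult_of_int_commute[symmetric])
  also have "s ^ j * (of_int a * wd p * wd u * wd q) = of_int a * (s ^ j * wd (p @ u @ q))"
    by (simp add: word_eval_append mult.assoc mult_of_int_commute)
  finally show ?case
    using Cons by (auto simp: au intro!: Q.span_add of_int_mult_in_span)
qed

lemma monomial_in_span_normal_monomials: "s ^ j * wd w \<in> Q.span normal_monomials"
proof (induction "(j, w)" arbitrary: j w rule: wf_induct[OF wf_measures[of
      "[\<lambda>(j, w). j + length w, \<lambda>(j, w). binary_value w]"]])
  case 1
  then have lower_degree: "s ^ j' * wd w' \<in> Q.span normal_monomials"
    if "j' + length w' < j + length w" for j' w'
    using that by (auto simp: measures_def)
  have smaller_word: "s ^ j * wd u \<in> Q.span normal_monomials"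
    if "length u = length w" "binary_value u < binary_value w" for u
    using 1 that by (auto simp: measures_def)
  consider "3 \<le> j" | "j < 3" "normal w" | "j < 3" "\<not> normal w" by linarith
  then show ?case
  proof cases
    case 1
    then have "s ^ j = 0" by (rule power_zero_mono[OF s_cube])
    then show ?thesis by (simp add: Q.span_zero)
  next
    case 2
    then show ?thesis by (intro Q.span_base) (auto simp: normal_monomials_def)
  next
    case 3
    then obtain L R p q where rule: "(L, R) \<in> set reduction_rules" and w: "w = p @ L @ q"
      by (auto simp: normal_def sublist_def)
    have split:
      "s ^ j * wd w = s ^ j * (wd p * (wd L + lc R) * wd q) - s ^ j * (wd p * lc R * wd q)"
      unfolding w by (simp add: word_eval_append algebra_simps)
    have "span_below (length w + j) \<subseteq> Q.span normal_monomials"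
      unfolding span_below_def using lower_degree
      by (intro Q.span_minimal) (auto simp: Q.subspace_span)
    moreover have "wd p * (wd L + lc R) * wd q \<in> span_below (length w)"
      by (rule mult_span_below[OF reduction_rules_in_span_below[OF rule]]) (simp add: w)
    then have "s ^ j * (wd p * (wd L + lc R) * wd q) \<in> span_below (length w + j)"
      by (rule s_power_mult_span_below)
    ultimately have "s ^ j * (wd p * (wd L + lc R) * wd q) \<in> Q.span normal_monomials"
      by blast
    moreover have "s ^ j * (wd p * lc R * wd q) \<in> Q.span normal_monomials"
      using reduction_rules_decreasing[OF rule] w
      by (intro sandwich_lc_in_span smaller_word) (auto simp: binary_value_infix_less)
    ultimately show ?thesis unfolding split by (rule Q.span_diff)
  qed
qed

lemma letter_left_mult_stable: "left_mult_stable (Q.span normal_monomials) (wd [l])"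
  unfolding left_mult_stable_def
proof
  fix v assume v: "v \<in> Q.span normal_monomials"
  have "wd [l] * v * 1 \<in> Q.span normal_monomials"
  proof (rule span_mult_closed[OF _ v])
    fix x assume "x \<in> normal_monomials"
    then obtain j w where x: "x = s ^ j * wd w" by (auto simp: normal_monomials_def)
    have "wd [l] * x * 1 = (wd [l] * s ^ j) * wd w" by (simp add: x mult.assoc)
    also have "wd [l] * s ^ j = s ^ j * wd [l]" by (rule s_power_commute[symmetric])
    finally have "wd [l] * x * 1 = s ^ j * wd (l # w)" by (simp add: mult.assoc)
    then show "wd [l] * x * 1 \<in> Q.span normal_monomials"
      using monomial_in_span_normal_monomials[of j "l # w"] by simp
  qed
  then show "wd [l] * v \<in> Q.span normal_monomials" by simp
qed

lemma nilpotent_relations_trivial: "(1::'a) = 0"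
proof (rule ccontr)
  assume nontrivial: "(1::'a) \<noteq> 0"
  define x where "x = (!) [b, c, 1 - b - c]"
  have "normal []" by (simp add: normal_def reduction_rules_def relation_defs)
  then have "s ^ 0 * wd [] \<in> normal_monomials"
    unfolding normal_monomials_def by (auto intro!: exI[of _ 0] exI[of _ "[]"])
  then have one: "1 \<in> Q.span normal_monomials" using Q.span_base by fastforce
  have sum: "(\<Sum>i<3. x i) = 1" by (simp add: x_def eval_nat_numeral)
  have b: "left_mult_stable (Q.span normal_monomials) b"
    using letter_left_mult_stable[of B] by simp
  have c: "left_mult_stable (Q.span normal_monomials) c"
    using letter_left_mult_stable[of C] by simp
  have rest: "left_mult_stable (Q.span normal_monomials) (1 - b - c)"
    by (intro left_mult_stable_span_diff left_mult_stable_one b c)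
  have "(1 - b - c) ^ 6 = ((1 - b - c) ^ 2) ^ 3" by (simp flip: power_mult)
  also have "(1 - b - c) ^ 2 = (b + c - 1) ^ 2" by (simp add: power2_eq_square algebra_simps)
  finally have "(1 - b - c) ^ 6 = 0" using square s_cube by simp
  then have "x i ^ 6 = 0" if "i < 3" for i
    using that b_cube c_fifth power_zero_mono[of b 3 6] power_zero_mono[of c 5 6]
    by (auto simp: x_def less_Suc_eq eval_nat_numeral)
  moreover have "left_mult_stable (Q.span normal_monomials) (x i)" if "i < 3" for i
    using that b c rest by (auto simp: x_def less_Suc_eq eval_nat_numeral)
  ultimately show False
    using no_nilpotent_partition_of_unity_on_finite_span[OF nontrivial finite_normal_monomials one
        finite_lessThan sum]
    by blast
qed

end

section \<open>Rings with the 2-nil-sum property\<close>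

lemma two_nil_sum_mono:
  assumes "two_nil_sum p q T" "p \<le> p'" "q \<le> q'"
  shows "two_nil_sum p' q' T"
  unfolding two_nil_sum_def
proof (intro allI impI)
  fix a :: 'a assume "\<not> central_unit a"
  then obtain x y where "a = x + y" "x ^ p = 0" "y ^ q = 0"
    using assms(1) unfolding two_nil_sum_def by blast
  then show "\<exists>x y. a = x + y \<and> x ^ p' = 0 \<and> y ^ q' = 0"
    using power_zero_mono assms(2,3) by blast
qed

lemma char_0_one_neq_zero: "CHAR('a::ring_1) = 0 \<Longrightarrow> (1::'a) \<noteq> 0"
  using of_nat_eq_0_iff_char_dvd[of 1, where 'a = 'a] by simp

lemma ints_invertible_if_two_nil_sum:
  assumes char: "CHAR('a::ring_1) = 0" and nil_sum: "two_nil_sum p q TYPE('a)"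
  shows "ints_invertible TYPE('a)"
  unfolding ints_invertible_def
proof (intro allI impI)
  fix n :: int assume n: "n \<noteq> 0"
  show "ring_unit (of_int n :: 'a)"
  proof (rule ccontr)
    assume "\<not> ring_unit (of_int n :: 'a)"
    then obtain x y :: 'a where xy: "of_int n = x + y" "x ^ p = 0" "y ^ q = 0"
      using nil_sum unfolding two_nil_sum_def central_unit_def by blast
    have y: "y = of_int n - x" using xy(1) by simp
    have "x * y = y * x" unfolding y by (simp add: algebra_simps mult_of_int_commute[of n x])
    from commuting_nilpotent_add[OF this xy(2,3)] have "(of_int n :: 'a) ^ (p + q) = 0"
      by (simp add: xy(1))
    then have "(of_int (n ^ (p + q)) :: 'a) = 0" by (simp only: of_int_power)
    then have "int CHAR('a) dvd n ^ (p + q)" by (simp only: of_int_eq_0_iff_char_dvd)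
    then show False using char n by simp
  qed
qed

lemma noncentral_square_with_central_cube:
  fixes n :: "'a::ring_1"
  assumes n5: "n ^ 5 = 0" and nc: "\<not> central n"
  obtains m s :: 'a where "\<not> central m" "m ^ 2 = s" "central s" "s ^ 3 = 0"
proof -
  have central_zero: "central (0::'a)" by (simp add: central_def)
  have power_power: "(n ^ i) ^ j = 0" if "5 \<le> i * j" for i j
    using power_zero_mono[OF n5 that] by (simp add: power_mult)
  consider "\<not> central (n ^ 4)" | "\<not> central (n ^ 3)" | "\<not> central (n ^ 2)" "central (n ^ 4)"
    | "central (n ^ 2)" by blast
  then show ?thesis
  proof cases
    case 1
    then show ?thesis using that[of "n ^ 4" 0] central_zero power_power[of 4 2] by simp
  next
    case 2
    then show ?thesis using that[of "n ^ 3" 0] central_zero power_power[of 3 2] by simp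
  next
    case 3
    then show ?thesis
      using that[of "n ^ 2" "n ^ 4"] power_power[of 4 3] by (simp add: power_mult[symmetric])
  next
    case 4
    then show ?thesis using that[of n "n ^ 2"] nc power_power[of 2 3] by simp
  qed
qed

lemma (in rat_algebra) nilpotent_central:
  fixes n :: 'a
  assumes nontrivial: "(1::'a) \<noteq> 0" and nil_sum: "two_nil_sum 3 5 TYPE('a)" and n: "n ^ 5 = 0"
  shows "central n"
proof (rule ccontr)
  assume "\<not> central n"
  then show False
  proof (rule noncentral_square_with_central_cube[OF n])
    fix m s :: 'a assume m: "\<not> central m" and ms: "m ^ 2 = s" "central s" "s ^ 3 = 0"
    have "\<not> central_unit (1 + m)"
      using m by (auto simp: central_unit_def central_def distrib_left distrib_right)
    then obtain b c where bc: "1 + m = b + c" "b ^ 3 = 0" "c ^ 5 = 0"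
      using nil_sum unfolding two_nil_sum_def by blast
    have "b + c - 1 = m" using bc(1) by (simp add: algebra_simps)
    then have square: "(b + c - 1) ^ 2 = s" using ms(1) by simp
    interpret N: nilpotent_relations T b c s
      by unfold_locales (use bc square ms in \<open>auto simp: central_def\<close>)
    show False using N.nilpotent_relations_trivial nontrivial by simp
  qed
qed

theorem proposition2p4:
  fixes p q :: nat
  assumes "CHAR('a::ring_1) = 0"
    and "1 \<le> p" and "p \<le> 3" and "1 \<le> q" and "q \<le> 5"
    and "two_nil_sum p q TYPE('a)"
  shows "\<forall>x y :: 'a. x * y = y * x"
proof -
  have nil_sum: "two_nil_sum 3 5 TYPE('a)"
    using two_nil_sum_mono[OF assms(6)] assms(3,5) by blast
  interpret rat_algebra "TYPE('a)"
    by unfold_locales (rule ints_invertible_if_two_nil_sum[OF assms(1,6)])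
  have nontrivial: "(1::'a) \<noteq> 0" by (rule char_0_one_neq_zero[OF assms(1)])
  have "central x" for x :: 'a
  proof (cases "central_unit x")
    case True
    then show ?thesis by (simp add: central_unit_def)
  next
    case False
    then obtain b c where bc: "x = b + c" "b ^ 3 = 0" "c ^ 5 = 0"
      using nil_sum unfolding two_nil_sum_def by blast
    have "central b" "central c"
      using nilpotent_central[OF nontrivial nil_sum] power_zero_mono[OF bc(2), of 5] bc(3) by auto
    then show ?thesis using bc(1) by (simp add: central_def distrib_left distrib_right)
  qed
  then show ?thesis by (simp add: central_def)
qed

end
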